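(* (Working in $\mathbf{ZF}$.) Let $X$ be a generalized topological space and let $(\alpha X,\alpha)$ be a compactification of $X_{top}$ (identify $X$ with $\alpha(X)$). Then $\mathrm{Cov}^w_{\alpha X}$ is a generalized topology in $\alpha X$ if and only if the operator $\mathrm{Ex}_{\alpha X}$ is admissibly additive, i.e. $\mathrm{Ex}_{\alpha X}(\bigcup_{U\in\mathcal U}U)=\bigcup_{U\in\mathcal U}\mathrm{Ex}_{\alpha X}(U)$ for every $\mathcal U\in\mathrm{Cov}_X$.
   Context: A generalized topological space (gts) $(X,\mathrm{Op}_X,\mathrm{Cov}_X)$ is in the sense of Delfs–Knebusch: $\mathrm{Op}_X\subseteq\mathcal P(X)$ and $\mathrm{Cov}_X\subseteq\mathcal P(\mathrm{Op}_X)$ satisfy (A1) $\emptyset,X\in\mathrm{Op}_X$; (A2) $\mathrm{Op}_X$ closed under finite unions and intersections; (A3) finite subfamilies of $\mathrm{Op}_X$ lie in $\mathrm{Cov}_X$; (A4) $\bigcup\mathcal U\in\mathrm{Op}_X$ for $\mathcal U\in\mathrm{Cov}_X$; (A5) for $\mathcal U\in\mathrm{Cov}_X$ and $V\in\mathrm{Op}_X$, $V\subseteq\bigcup\mathcal U$: $\{V\cap U:U\in\mathcal U\}\in\mathrm{Cov}_X$; (A6) if $\mathcal U\in\mathrm{Cov}_X$ and $\mathcal V_U\in\mathrm{Cov}_X$ with $\bigcup\mathcal V_U=U$ then $\bigcup_U\mathcal V_U\in\mathrm{Cov}_X$; (A7) if $\mathcal U\in\mathrm{Cov}_X$, $\mathcal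 V\subseteq\mathrm{Op}_X$, $\bigcup\mathcal V=\bigcup\mathcal U$, every member of $\mathcal U$ in some member of $\mathcal V$, then $\mathcal V\in\mathrm{Cov}_X$; (A8) if $\mathcal U\in\mathrm{Cov}_X$, $V\subseteq\bigcup\mathcal U$, $V\cap U\in\mathrm{Op}_X$ for all $U\in\mathcal U$, then $V\in\mathrm{Op}_X$. A generalized topology in a set $Z$ is a collection $\mathrm{Cov}$ such that $(Z,\bigcup\mathrm{Cov},\mathrm{Cov})$ is a gts. $X_{top}$ is $X$ with the topology generated by $\mathrm{Op}_X$. A compactification $(\alpha X,\alpha)$ of $X_{top}$ is a compact topological space $\alpha X$ (topology $\tau_{\alpha X}$) with a homeomorphic embedding $\alpha$ of $X_{top}$ onto a dense subset. Define $\mathrm{Op}^S_{\alpha X}=\{V\in\tau_{\alpha X}:V\cap X\in\mathrm{Op}_X\}$, $\mathrm{Cov}^S_{\alpha X}=\{\mathcal V\subseteq\mathrm{Op}^S_{\alpha X}:\{V\cap X:V\in\mathcal V\}\in\mathrm{Cov}_X\}$, $\mathrm{Ex}_{\alpha X}(U)=\alpha X\setminus\mathrm{cl}_{\alpha X}(X\setminus U)$ for $U\in\mathrm{Op}_X$, $\mathrm{Op}^w_{\alpha X}=\{\mathrm{Ex}_{\alpha X}(U):U\in\mathrm{Op}_X\}$ and $\mathrm{Cov}^w_{\alpha X}=\{\mathcal V\in\mathrm{Cov}^S_{\alpha X}:\mathcal V\subseteq\mathrm{Op}^w_{\alpha X}\}$. *)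

theory Defs
  imports "HOL-Analysis.Analysis"
begin

text \<open>Generalized topological space (Delfs--Knebusch), axioms A1--A8.\<close>
definition gts :: "'a set \<Rightarrow> 'a set set \<Rightarrow> 'a set set set \<Rightarrow> bool" where
  "gts X Op Cov \<longleftrightarrow>
     Op \<subseteq> Pow X \<and> Cov \<subseteq> Pow Op \<and>
     ({} \<in> Op \<and> X \<in> Op) \<and>
     (\<forall>U\<in>Op. \<forall>V\<in>Op. U \<union> V \<in> Op \<and> U \<inter> V \<in> Op) \<and>
     (\<forall>\<U>. finite \<U> \<and> \<U> \<subseteq> Op \<longrightarrow> \<U> \<in> Cov) \<and>
     (\<forall>\<U>\<in>Cov. \<Union>\<U> \<in> Op) \<and>
     (\<forall>\<U>\<in>Cov. \<forall>V\<in>Op. V \<subseteq> \<Union>\<U> \<longrightarrow> (\<lambda>U. V \<inter> U) ` \<U> \<in> Cov) \<and>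
     (\<forall>\<U>\<in>Cov. \<forall>\<V>. (\<forall>U\<in>\<U>. \<V> U \<in> Cov \<and> \<Union>(\<V> U) = U) \<longrightarrow> (\<Union>U\<in>\<U>. \<V> U) \<in> Cov) \<and>
     (\<forall>\<U>\<in>Cov. \<forall>\<V>. \<V> \<subseteq> Op \<and> \<Union>\<V> = \<Union>\<U> \<and> (\<forall>U\<in>\<U>. \<exists>V\<in>\<V>. U \<subseteq> V) \<longrightarrow> \<V> \<in> Cov) \<and>
     (\<forall>\<U>\<in>Cov. \<forall>V. V \<subseteq> \<Union>\<U> \<and> (\<forall>U\<in>\<U>. V \<inter> U \<in> Op) \<longrightarrow> V \<in> Op)"

definition generalized_topology_in :: "'a set \<Rightarrow> 'a set set set \<Rightarrow> bool" where
  "generalized_topology_in Z Cov \<longleftrightarrow> gts Z (\<Union>Cov) Cov"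

abbreviation Xtop :: "'a set set \<Rightarrow> 'a topology" where
  "Xtop Op \<equiv> topology_generated_by Op"

text \<open>Compactification (alpha X, alpha) of X_top; alpha X is the topology T.\<close>
definition compactification :: "'a set set \<Rightarrow> 'b topology \<Rightarrow> ('a \<Rightarrow> 'b) \<Rightarrow> bool" where
  "compactification Op T \<alpha> \<longleftrightarrow>
     compact_space T \<and> embedding_map (Xtop Op) T \<alpha> \<and>
     T closure_of (\<alpha> ` topspace (Xtop Op)) = topspace T"

text \<open>Under the identification of X with alpha(X), "V \<inter> X" is the preimage
  of V in X, and "X \<setminus> U" is alpha(X \<setminus> U).\<close>
definition trace :: "'a set \<Rightarrow> ('a \<Rightarrow> 'b) \<Rightarrow> 'b set \<Rightarrow> 'a set" where
  "trace X \<alpha> V = {x \<in> X. \<alpha> x \<in> V}"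

definition OpS :: "'a set \<Rightarrow> 'a set set \<Rightarrow> 'b topology \<Rightarrow> ('a \<Rightarrow> 'b) \<Rightarrow> 'b set set" where
  "OpS X Op T \<alpha> = {V. openin T V \<and> trace X \<alpha> V \<in> Op}"

definition CovS :: "'a set \<Rightarrow> 'a set set \<Rightarrow> 'a set set set \<Rightarrow> 'b topology \<Rightarrow> ('a \<Rightarrow> 'b) \<Rightarrow> 'b set set set" where
  "CovS X Op Cov T \<alpha> = {\<V>. \<V> \<subseteq> OpS X Op T \<alpha> \<and> trace X \<alpha> ` \<V> \<in> Cov}"

definition Ex :: "'a set \<Rightarrow> 'b topology \<Rightarrow> ('a \<Rightarrow> 'b) \<Rightarrow> 'a set \<Rightarrow> 'b set" where
  "Ex X T \<alpha> U = topspace T - T closure_of (\<alpha> ` (X - U))"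

definition Opw :: "'a set \<Rightarrow> 'a set set \<Rightarrow> 'b topology \<Rightarrow> ('a \<Rightarrow> 'b) \<Rightarrow> 'b set set" where
  "Opw X Op T \<alpha> = Ex X T \<alpha> ` Op"

definition Covw :: "'a set \<Rightarrow> 'a set set \<Rightarrow> 'a set set set \<Rightarrow> 'b topology \<Rightarrow> ('a \<Rightarrow> 'b) \<Rightarrow> 'b set set set" where
  "Covw X Op Cov T \<alpha> = {\<V> \<in> CovS X Op Cov T \<alpha>. \<V> \<subseteq> Opw X Op T \<alpha>}"

definition admissibly_additive :: "'a set \<Rightarrow> 'a set set set \<Rightarrow> 'b topology \<Rightarrow> ('a \<Rightarrow> 'b) \<Rightarrow> bool" where
  "admissibly_additive X Cov T \<alpha> \<longleftrightarrow>
     (\<forall>\<U>\<in>Cov. Ex X T \<alpha> (\<Union>\<U>) = (\<Union>U\<in>\<U>. Ex X T \<alpha> U))"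

end

theory Submission imports Defs begin

text \<open>Restriction to X (the map trace) and Ex are mutually inverse bijections between
  Op_X and Op^w, and Cov^w is the image of Cov_X under Ex. Since Ex commutes with finite
  intersections and trace with all unions and intersections, every axiom of a generalized
  topology transfers from X to (Op^w, Cov^w), except the ones producing unions of
  coverings: these hold precisely when Ex(\<Union>\<U>) = \<Union>Ex(U) for admissible \<U>.\<close>

lemma gtsD:
  assumes "gts X Op Cov"
  shows gts_Op_subset: "Op \<subseteq> Pow X"
    and gts_Cov_subset: "Cov \<subseteq> Pow Op"
    and gts_empty: "{} \<in> Op"
    and gts_top: "X \<in> Op"
    and gts_Un: "\<And>U V. U \<in> Op \<Longrightarrow> V \<in> Op \<Longrightarrow> U \<union> V \<in> Op"
    and gts_Int: "\<And>U V. U \<in> Op \<Longrightarrow> V \<in> Op \<Longrightarrow> U \<inter> V \<in> Op"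
    and gts_finite_Cov: "\<And>\<U>. finite \<U> \<Longrightarrow> \<U> \<subseteq> Op \<Longrightarrow> \<U> \<in> Cov"
    and gts_Union_Cov: "\<And>\<U>. \<U> \<in> Cov \<Longrightarrow> \<Union>\<U> \<in> Op"
    and gts_restrict_Cov:
      "\<And>\<U> V. \<U> \<in> Cov \<Longrightarrow> V \<in> Op \<Longrightarrow> V \<subseteq> \<Union>\<U> \<Longrightarrow> (\<lambda>U. V \<inter> U) ` \<U> \<in> Cov"
    and gts_refine_Cov:
      "\<And>\<U> \<V>. \<U> \<in> Cov \<Longrightarrow> (\<And>U. U \<in> \<U> \<Longrightarrow> \<V> U \<in> Cov \<and> \<Union>(\<V> U) = U)
        \<Longrightarrow> (\<Union>U\<in>\<U>. \<V> U) \<in> Cov"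
    and gts_coarsen_Cov:
      "\<And>\<U> \<V>. \<U> \<in> Cov \<Longrightarrow> \<V> \<subseteq> Op \<Longrightarrow> \<Union>\<V> = \<Union>\<U> \<Longrightarrow> (\<And>U. U \<in> \<U> \<Longrightarrow> \<exists>V\<in>\<V>. U \<subseteq> V)
        \<Longrightarrow> \<V> \<in> Cov"
    and gts_local_Op:
      "\<And>\<U> V. \<U> \<in> Cov \<Longrightarrow> V \<subseteq> \<Union>\<U> \<Longrightarrow> (\<And>U. U \<in> \<U> \<Longrightarrow> V \<inter> U \<in> Op) \<Longrightarrow> V \<in> Op"
proof -
  have "Op \<subseteq> Pow X" "Cov \<subseteq> Pow Op" "{} \<in> Op" "X \<in> Op"
    and A2: "\<forall>U\<in>Op. \<forall>V\<in>Op. U \<union> V \<in> Op \<and> U \<inter> V \<in> Op"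
    and A3: "\<forall>\<U>. finite \<U> \<and> \<U> \<subseteq> Op \<longrightarrow> \<U> \<in> Cov"
    and A4: "\<forall>\<U>\<in>Cov. \<Union>\<U> \<in> Op"
    and A5: "\<forall>\<U>\<in>Cov. \<forall>V\<in>Op. V \<subseteq> \<Union>\<U> \<longrightarrow> (\<lambda>U. V \<inter> U) ` \<U> \<in> Cov"
    and A6: "\<forall>\<U>\<in>Cov. \<forall>\<V>. (\<forall>U\<in>\<U>. \<V> U \<in> Cov \<and> \<Union>(\<V> U) = U) \<longrightarrow> (\<Union>U\<in>\<U>. \<V> U) \<in> Cov"
    and A7: "\<forall>\<U>\<in>Cov. \<forall>\<V>. \<V> \<subseteq> Op \<and> \<Union>\<V> = \<Union>\<U> \<and> (\<forall>U\<in>\<U>. \<exists>V\<in>\<V>. U \<subseteq> V) \<longrightarrow> \<V> \<in> Cov"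
    and A8: "\<forall>\<U>\<in>Cov. \<forall>V. V \<subseteq> \<Union>\<U> \<and> (\<forall>U\<in>\<U>. V \<inter> U \<in> Op) \<longrightarrow> V \<in> Op"
    using assms unfolding gts_def by - (elim conjE, assumption)+
  then show "Op \<subseteq> Pow X" "Cov \<subseteq> Pow Op" "{} \<in> Op" "X \<in> Op" by -
  show "\<And>U V. U \<in> Op \<Longrightarrow> V \<in> Op \<Longrightarrow> U \<union> V \<in> Op"
    and "\<And>U V. U \<in> Op \<Longrightarrow> V \<in> Op \<Longrightarrow> U \<inter> V \<in> Op"
    using A2 by simp_all
  show "\<And>\<U>. finite \<U> \<Longrightarrow> \<U> \<subseteq> Op \<Longrightarrow> \<U> \<in> Cov"
    by (rule A3[rule_format, OF conjI])
  show "\<And>\<U>. \<U> \<in> Cov \<Longrightarrow> \<Union>\<U> \<in> Op"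
    by (rule A4[rule_format])
  show "\<And>\<U> V. \<U> \<in> Cov \<Longrightarrow> V \<in> Op \<Longrightarrow> V \<subseteq> \<Union>\<U> \<Longrightarrow> (\<lambda>U. V \<inter> U) ` \<U> \<in> Cov"
    by (rule A5[rule_format])
  show "\<And>\<U> \<V>. \<U> \<in> Cov \<Longrightarrow> (\<And>U. U \<in> \<U> \<Longrightarrow> \<V> U \<in> Cov \<and> \<Union>(\<V> U) = U)
      \<Longrightarrow> (\<Union>U\<in>\<U>. \<V> U) \<in> Cov"
    by (rule A6[rule_format])
  show "\<And>\<U> \<V>. \<U> \<in> Cov \<Longrightarrow> \<V> \<subseteq> Op \<Longrightarrow> \<Union>\<V> = \<Union>\<U> \<Longrightarrow> (\<And>U. U \<in> \<U> \<Longrightarrow> \<exists>V\<in>\<V>. U \<subseteq> V)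
      \<Longrightarrow> \<V> \<in> Cov"
    by (rule A7[rule_format, OF _ conjI[OF _ conjI[OF _ ballI]]])
  show "\<And>\<U> V. \<U> \<in> Cov \<Longrightarrow> V \<subseteq> \<Union>\<U> \<Longrightarrow> (\<And>U. U \<in> \<U> \<Longrightarrow> V \<inter> U \<in> Op) \<Longrightarrow> V \<in> Op"
    by (rule A8[rule_format, OF _ conjI[OF _ ballI]])
qed

lemma gts_Union_Op:
  assumes "gts X Op Cov"
  shows "\<Union>Op = X"
  using gts_Op_subset[OF assms] gts_top[OF assms] by blast

lemma trace_Union: "trace X \<alpha> (\<Union>\<V>) = \<Union>(trace X \<alpha> ` \<V>)"
  unfolding trace_def by auto

lemma trace_Int: "trace X \<alpha> (A \<inter> B) = trace X \<alpha> A \<inter> trace X \<alpha> B"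
  unfolding trace_def by auto

lemma trace_mono: "A \<subseteq> B \<Longrightarrow> trace X \<alpha> A \<subseteq> trace X \<alpha> B"
  unfolding trace_def by auto

text \<open>E abstracts Ex and Z the space \<alpha>X; CovE then becomes Cov^w.\<close>

locale gts_extension =
  fixes X :: "'a set" and Op :: "'a set set" and Cov :: "'a set set set"
    and \<alpha> :: "'a \<Rightarrow> 'b" and Z :: "'b set" and E :: "'a set \<Rightarrow> 'b set"
  assumes gts: "gts X Op Cov"
    and trace_E: "U \<in> Op \<Longrightarrow> trace X \<alpha> (E U) = U"
    and E_subset: "U \<in> Op \<Longrightarrow> E U \<subseteq> Z"
    and E_Int: "U \<in> Op \<Longrightarrow> V \<in> Op \<Longrightarrow> E (U \<inter> V) = E U \<inter> E V"
    and E_empty: "E {} = {}"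
    and E_top: "E X = Z"
begin

definition CovE :: "'b set set set" where
  "CovE = {\<V>. \<V> \<subseteq> E ` Op \<and> trace X \<alpha> ` \<V> \<in> Cov}"

lemma CovE_iff: "\<V> \<in> CovE \<longleftrightarrow> \<V> \<subseteq> E ` Op \<and> trace X \<alpha> ` \<V> \<in> Cov"
  unfolding CovE_def by simp

lemma trace_in_Op: "V \<in> E ` Op \<Longrightarrow> trace X \<alpha> V \<in> Op"
  using trace_E by auto

lemma E_trace: "V \<in> E ` Op \<Longrightarrow> E (trace X \<alpha> V) = V"
  using trace_E by auto

lemma E_image_trace: "\<V> \<subseteq> E ` Op \<Longrightarrow> E ` trace X \<alpha> ` \<V> = \<V>"
  unfolding image_image using E_trace by (simp add: subset_eq)

lemma trace_image_E: "\<U> \<subseteq> Op \<Longrightarrow> trace X \<alpha> ` E ` \<U> = \<U>"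
  unfolding image_image using trace_E by (simp add: subset_eq)

lemma image_E_in_CovE:
  assumes "\<U> \<in> Cov"
  shows "E ` \<U> \<in> CovE"
proof -
  have "\<U> \<subseteq> Op" using assms gts_Cov_subset[OF gts] by blast
  with assms show ?thesis by (simp add: CovE_iff trace_image_E image_mono)
qed

lemma Union_CovE: "\<Union>CovE = E ` Op"
proof
  show "\<Union>CovE \<subseteq> E ` Op"
    unfolding CovE_def by blast
  show "E ` Op \<subseteq> \<Union>CovE"
  proof
    fix V assume "V \<in> E ` Op"
    then obtain U where "U \<in> Op" "V = E U" by blast
    then have "E ` {U} \<in> CovE"
      by (intro image_E_in_CovE gts_finite_Cov[OF gts]) simp_all
    then show "V \<in> \<Union>CovE" using \<open>V = E U\<close> by blast
  qed
qed

lemma Int_in_image_E: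
  assumes "A \<in> E ` Op" and "B \<in> E ` Op"
  shows "A \<inter> B \<in> E ` Op"
proof -
  obtain U V where UV: "U \<in> Op" "V \<in> Op" "A = E U" "B = E V" using assms by blast
  then have "A \<inter> B = E (U \<inter> V)" by (simp add: E_Int)
  moreover have "U \<inter> V \<in> Op" by (rule gts_Int[OF gts UV(1,2)])
  ultimately show ?thesis by blast
qed

lemma finite_in_CovE:
  assumes "finite \<V>" and "\<V> \<subseteq> E ` Op"
  shows "\<V> \<in> CovE"
proof -
  have "trace X \<alpha> ` \<V> \<subseteq> Op" using assms(2) trace_in_Op by blast
  then have "trace X \<alpha> ` \<V> \<in> Cov" using assms(1) by (simp add: gts_finite_Cov[OF gts])
  with assms(2) show ?thesis by (simp add: CovE_iff)
qed

lemma restrict_in_CovE: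
  assumes "\<V> \<in> CovE" and "V \<in> E ` Op" and "V \<subseteq> \<Union>\<V>"
  shows "(\<lambda>U. V \<inter> U) ` \<V> \<in> CovE"
proof -
  have \<V>: "\<V> \<subseteq> E ` Op" "trace X \<alpha> ` \<V> \<in> Cov" using assms(1) by (simp_all add: CovE_iff)
  have "trace X \<alpha> V \<subseteq> \<Union>(trace X \<alpha> ` \<V>)"
    using trace_mono[OF assms(3)] by (simp only: trace_Union)
  then have "(\<lambda>U. trace X \<alpha> V \<inter> U) ` trace X \<alpha> ` \<V> \<in> Cov"
    by (rule gts_restrict_Cov[OF gts \<V>(2) trace_in_Op[OF assms(2)]])
  moreover have "(\<lambda>U. trace X \<alpha> V \<inter> U) ` trace X \<alpha> ` \<V> = trace X \<alpha> ` (\<lambda>U. V \<inter> U) ` \<V>"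
    by (simp add: image_image trace_Int)
  moreover have "(\<lambda>U. V \<inter> U) ` \<V> \<subseteq> E ` Op"
    using \<V>(1) Int_in_image_E[OF assms(2)] by blast
  ultimately show ?thesis by (simp add: CovE_iff)
qed

lemma UN_in_CovE:
  assumes "\<U> \<in> CovE" and \<V>: "\<And>U. U \<in> \<U> \<Longrightarrow> \<V> U \<in> CovE \<and> \<Union>(\<V> U) = U"
  shows "(\<Union>U\<in>\<U>. \<V> U) \<in> CovE"
proof -
  define \<W> where "\<W> U' = trace X \<alpha> ` \<V> (E U')" for U'
  have \<U>: "\<U> \<subseteq> E ` Op" "trace X \<alpha> ` \<U> \<in> Cov" using assms(1) by (simp_all add: CovE_iff)
  have \<W>_trace: "\<W> (trace X \<alpha> U) = trace X \<alpha> ` \<V> U" if "U \<in> \<U>" for U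
    using that \<U>(1) E_trace unfolding \<W>_def by auto
  have "\<W> U' \<in> Cov \<and> \<Union>(\<W> U') = U'" if U': "U' \<in> trace X \<alpha> ` \<U>" for U'
  proof -
    obtain U where "U \<in> \<U>" "U' = trace X \<alpha> U" using U' by blast
    then show ?thesis
      using \<V>[OF \<open>U \<in> \<U>\<close>] \<W>_trace[OF \<open>U \<in> \<U>\<close>] by (simp add: CovE_iff trace_Union[symmetric])
  qed
  then have "(\<Union>U'\<in>trace X \<alpha> ` \<U>. \<W> U') \<in> Cov"
    by (rule gts_refine_Cov[OF gts \<U>(2)])
  moreover have "(\<Union>U'\<in>trace X \<alpha> ` \<U>. \<W> U') = trace X \<alpha> ` (\<Union>U\<in>\<U>. \<V> U)"
    using \<W>_trace by (auto simp: image_UN)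
  moreover have "(\<Union>U\<in>\<U>. \<V> U) \<subseteq> E ` Op"
  proof (rule UN_least)
    fix U assume "U \<in> \<U>"
    then show "\<V> U \<subseteq> E ` Op" using \<V> by (simp add: CovE_iff)
  qed
  ultimately show ?thesis by (simp add: CovE_iff)
qed

lemma coarsening_in_CovE:
  assumes "\<U> \<in> CovE" and "\<V> \<subseteq> E ` Op" and "\<Union>\<V> = \<Union>\<U>"
    and refines: "\<And>U. U \<in> \<U> \<Longrightarrow> \<exists>V\<in>\<V>. U \<subseteq> V"
  shows "\<V> \<in> CovE"
proof -
  have "trace X \<alpha> ` \<U> \<in> Cov" using assms(1) by (simp add: CovE_iff)
  moreover have "trace X \<alpha> ` \<V> \<subseteq> Op" using assms(2) trace_in_Op by blast
  moreover have "\<Union>(trace X \<alpha> ` \<V>) = \<Union>(trace X \<alpha> ` \<U>)"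
    using assms(3) by (simp only: trace_Union[symmetric])
  moreover have "\<exists>V'\<in>trace X \<alpha> ` \<V>. U' \<subseteq> V'" if U': "U' \<in> trace X \<alpha> ` \<U>" for U'
  proof -
    obtain U where "U \<in> \<U>" "U' = trace X \<alpha> U" using U' by blast
    obtain V where "V \<in> \<V>" "U \<subseteq> V" using refines[OF \<open>U \<in> \<U>\<close>] by blast
    show ?thesis
    proof
      show "trace X \<alpha> V \<in> trace X \<alpha> ` \<V>" using \<open>V \<in> \<V>\<close> by (rule imageI)
      show "U' \<subseteq> trace X \<alpha> V" using \<open>U' = trace X \<alpha> U\<close> trace_mono[OF \<open>U \<subseteq> V\<close>] by simp
    qed
  qed
  ultimately have "trace X \<alpha> ` \<V> \<in> Cov"
    by (rule gts_coarsen_Cov[OF gts])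
  with assms(2) show ?thesis by (simp add: CovE_iff)
qed

lemma additive_if_gts:
  assumes "gts Z (E ` Op) CovE" and "\<U> \<in> Cov"
  shows "E (\<Union>\<U>) = \<Union>(E ` \<U>)"
proof -
  have "\<U> \<subseteq> Op" using assms(2) gts_Cov_subset[OF gts] by blast
  have "\<Union>(E ` \<U>) \<in> E ` Op"
    by (rule gts_Union_Cov[OF assms(1) image_E_in_CovE[OF assms(2)]])
  then have "\<Union>(E ` \<U>) = E (trace X \<alpha> (\<Union>(E ` \<U>)))" by (simp add: E_trace)
  also have "trace X \<alpha> (\<Union>(E ` \<U>)) = \<Union>\<U>"
    unfolding trace_Union trace_image_E[OF \<open>\<U> \<subseteq> Op\<close>] ..
  finally show ?thesis by simp
qed

end

locale additive_gts_extension = gts_extension +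
  assumes E_Union: "\<U> \<in> Cov \<Longrightarrow> E (\<Union>\<U>) = \<Union>(E ` \<U>)"
begin

lemma Un_in_image_E:
  assumes "A \<in> E ` Op" and "B \<in> E ` Op"
  shows "A \<union> B \<in> E ` Op"
proof -
  obtain U V where UV: "U \<in> Op" "V \<in> Op" "A = E U" "B = E V" using assms by blast
  have "{U, V} \<in> Cov" by (rule gts_finite_Cov[OF gts]) (simp_all add: UV)
  then have "A \<union> B = E (U \<union> V)" using E_Union[of "{U, V}"] UV by simp
  moreover have "U \<union> V \<in> Op" by (rule gts_Un[OF gts UV(1,2)])
  ultimately show ?thesis by blast
qed

lemma Union_in_image_E:
  assumes "\<V> \<in> CovE"
  shows "\<Union>\<V> \<in> E ` Op"
proof -
  have \<V>: "\<V> \<subseteq> E ` Op" "trace X \<alpha> ` \<V> \<in> Cov" using assms by (simp_all add: CovE_iff)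
  have "\<Union>\<V> = \<Union>(E ` trace X \<alpha> ` \<V>)" using E_image_trace[OF \<V>(1)] by simp
  also have "\<dots> = E (\<Union>(trace X \<alpha> ` \<V>))" using E_Union[OF \<V>(2)] by simp
  finally show ?thesis using gts_Union_Cov[OF gts \<V>(2)] by blast
qed

lemma local_in_image_E:
  assumes "\<V> \<in> CovE" and "V \<subseteq> \<Union>\<V>" and local: "\<And>U. U \<in> \<V> \<Longrightarrow> V \<inter> U \<in> E ` Op"
  shows "V \<in> E ` Op"
proof -
  let ?t = "trace X \<alpha>"
  let ?\<W> = "(\<lambda>U. ?t V \<inter> U) ` ?t ` \<V>"
  have \<V>: "?t ` \<V> \<in> Cov" using assms(1) by (simp add: CovE_iff)
  have sub: "?t V \<subseteq> \<Union>(?t ` \<V>)"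
    using trace_mono[OF assms(2)] by (simp only: trace_Union)
  have "?t V \<inter> U' \<in> Op" if U': "U' \<in> ?t ` \<V>" for U'
  proof -
    obtain U where "U \<in> \<V>" "U' = ?t U" using U' by blast
    then show ?thesis using trace_in_Op[OF local[OF \<open>U \<in> \<V>\<close>]] by (simp add: trace_Int)
  qed
  then have tV: "?t V \<in> Op" by (rule gts_local_Op[OF gts \<V> sub])
  have "\<Union>?\<W> = ?t V" using sub by blast
  then have "E (?t V) = E (\<Union>?\<W>)" by simp
  also have "\<dots> = \<Union>(E ` ?\<W>)"
    by (rule E_Union[OF gts_restrict_Cov[OF gts \<V> tV sub]])
  also have "E ` ?\<W> = (\<lambda>U. E (?t (V \<inter> U))) ` \<V>"
    by (simp add: image_image trace_Int)
  also have "\<dots> = (\<lambda>U. V \<inter> U) ` \<V>"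
  proof (rule image_cong)
    fix U assume "U \<in> \<V>"
    then show "E (?t (V \<inter> U)) = V \<inter> U" by (rule E_trace[OF local])
  qed simp
  also have "\<Union>((\<lambda>U. V \<inter> U) ` \<V>) = V" using assms(2) by blast
  finally have "E (?t V) = V" .
  then show ?thesis using tV by (metis image_eqI)
qed

lemma gts_CovE: "gts Z (E ` Op) CovE"
  unfolding gts_def
proof (intro conjI ballI allI impI)
  show "E ` Op \<subseteq> Pow Z" using E_subset by blast
  show "CovE \<subseteq> Pow (E ` Op)" unfolding CovE_def by blast
  show "{} \<in> E ` Op" using gts_empty[OF gts] E_empty by (metis image_eqI)
  show "Z \<in> E ` Op" using gts_top[OF gts] E_top by (metis image_eqI)
  show "\<And>A B. A \<in> E ` Op \<Longrightarrow> B \<in> E ` Op \<Longrightarrow> A \<union> B \<in> E ` Op" by (rule Un_in_image_E)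
  show "\<And>A B. A \<in> E ` Op \<Longrightarrow> B \<in> E ` Op \<Longrightarrow> A \<inter> B \<in> E ` Op" by (rule Int_in_image_E)
  show "\<And>\<V>. finite \<V> \<and> \<V> \<subseteq> E ` Op \<Longrightarrow> \<V> \<in> CovE"
    by (rule finite_in_CovE) simp_all
  show "\<And>\<V>. \<V> \<in> CovE \<Longrightarrow> \<Union>\<V> \<in> E ` Op" by (rule Union_in_image_E)
  show "\<And>\<V> V. \<V> \<in> CovE \<Longrightarrow> V \<in> E ` Op \<Longrightarrow> V \<subseteq> \<Union>\<V> \<Longrightarrow> (\<lambda>U. V \<inter> U) ` \<V> \<in> CovE"
    by (rule restrict_in_CovE)
  show "\<And>\<U> \<V>. \<U> \<in> CovE \<Longrightarrow> \<forall>U\<in>\<U>. \<V> U \<in> CovE \<and> \<Union>(\<V> U) = U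
      \<Longrightarrow> (\<Union>U\<in>\<U>. \<V> U) \<in> CovE"
    by (rule UN_in_CovE) simp_all
  show "\<And>\<U> \<V>. \<U> \<in> CovE \<Longrightarrow> \<V> \<subseteq> E ` Op \<and> \<Union>\<V> = \<Union>\<U> \<and> (\<forall>U\<in>\<U>. \<exists>V\<in>\<V>. U \<subseteq> V)
      \<Longrightarrow> \<V> \<in> CovE"
    by (rule coarsening_in_CovE) auto
  show "\<And>\<V> V. \<V> \<in> CovE \<Longrightarrow> V \<subseteq> \<Union>\<V> \<and> (\<forall>U\<in>\<V>. V \<inter> U \<in> E ` Op) \<Longrightarrow> V \<in> E ` Op"
    by (rule local_in_image_E) auto
qed

end

context gts_extension
begin

theorem generalized_topology_iff_additive:
  "generalized_topology_in Z CovE \<longleftrightarrow> (\<forall>\<U>\<in>Cov. E (\<Union>\<U>) = \<Union>(E ` \<U>))"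
proof
  assume "generalized_topology_in Z CovE"
  then have gts_CovE: "gts Z (E ` Op) CovE"
    by (simp add: generalized_topology_in_def Union_CovE)
  show "\<forall>\<U>\<in>Cov. E (\<Union>\<U>) = \<Union>(E ` \<U>)"
    using additive_if_gts[OF gts_CovE] by simp
next
  assume "\<forall>\<U>\<in>Cov. E (\<Union>\<U>) = \<Union>(E ` \<U>)"
  then interpret additive_gts_extension X Op Cov \<alpha> Z E
    by unfold_locales simp
  show "generalized_topology_in Z CovE"
    using gts_CovE by (simp add: generalized_topology_in_def Union_CovE)
qed

end

lemma Ex_Int: "Ex X T \<alpha> (U \<inter> V) = Ex X T \<alpha> U \<inter> Ex X T \<alpha> V"
  unfolding Ex_def by (simp only: Diff_Int image_Un closure_of_Un Diff_Un)

lemma Ex_empty: "T closure_of (\<alpha> ` X) = topspace T \<Longrightarrow> Ex X T \<alpha> {} = {}"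
  unfolding Ex_def by simp

lemma Ex_top: "Ex X T \<alpha> X = topspace T"
  unfolding Ex_def by simp

lemma openin_Ex: "openin T (Ex X T \<alpha> U)"
  unfolding Ex_def by (simp add: openin_diff)

lemma trace_Ex:
  assumes emb: "embedding_map (Xtop Op) T \<alpha>" and X: "\<Union>Op = X" and U: "U \<in> Op"
  shows "trace X \<alpha> (Ex X T \<alpha> U) = U"
proof -
  have tX: "topspace (Xtop Op) = X" using X by simp
  have hom: "homeomorphic_map (Xtop Op) (subtopology T (\<alpha> ` X)) \<alpha>"
    using emb tX by (simp add: embedding_map_def)
  have "closedin (Xtop Op) (X - U)"
    using closedin_diff[OF closedin_topspace topology_generated_by_Basis[OF U]] tX by simp
  then have cl: "Xtop Op closure_of (X - U) = X - U" by (simp add: closure_of_eq)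
  have "subtopology T (\<alpha> ` X) closure_of (\<alpha> ` (X - U)) = \<alpha> ` (Xtop Op closure_of (X - U))"
    by (rule homeomorphic_map_closure_of[OF hom]) (use tX in auto)
  then have "\<alpha> ` X \<inter> T closure_of (\<alpha> ` X \<inter> \<alpha> ` (X - U)) = \<alpha> ` (X - U)"
    unfolding closure_of_subtopology cl by simp
  moreover have "\<alpha> ` X \<inter> \<alpha> ` (X - U) = \<alpha> ` (X - U)" by blast
  ultimately have closure: "\<alpha> ` X \<inter> T closure_of (\<alpha> ` (X - U)) = \<alpha> ` (X - U)" by simp
  have inj: "inj_on \<alpha> X"
    using homeomorphic_imp_injective_map[OF hom] tX by simp
  have "\<alpha> ` X \<subseteq> topspace T"
    using homeomorphic_imp_surjective_map[OF hom] tX by auto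
  have "\<alpha> x \<in> T closure_of (\<alpha> ` (X - U)) \<longleftrightarrow> x \<notin> U" if x: "x \<in> X" for x
  proof -
    have "\<alpha> x \<in> T closure_of (\<alpha> ` (X - U)) \<longleftrightarrow> \<alpha> x \<in> \<alpha> ` (X - U)"
      using closure x by blast
    also have "\<dots> \<longleftrightarrow> x \<in> X - U"
      using inj x by (meson Diff_subset inj_on_image_mem_iff)
    finally show ?thesis using x by blast
  qed
  moreover have "U \<subseteq> X" using U X by blast
  ultimately show ?thesis
    using \<open>\<alpha> ` X \<subseteq> topspace T\<close> unfolding trace_def Ex_def by auto
qed

theorem proposition5p12:
  fixes X :: "'a set" and Op :: "'a set set" and Cov :: "'a set set set"
    and T :: "'b topology" and \<alpha> :: "'a \<Rightarrow> 'b"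
  assumes "gts X Op Cov"
    and "compactification Op T \<alpha>"
  shows "generalized_topology_in (topspace T) (Covw X Op Cov T \<alpha>)
           \<longleftrightarrow> admissibly_additive X Cov T \<alpha>"
proof -
  have X: "\<Union>Op = X" by (rule gts_Union_Op[OF assms(1)])
  have emb: "embedding_map (Xtop Op) T \<alpha>" and dense: "T closure_of (\<alpha> ` X) = topspace T"
    using assms(2) X by (simp_all add: compactification_def)
  interpret gts_extension X Op Cov \<alpha> "topspace T" "Ex X T \<alpha>"
  proof
    show "\<And>U. U \<in> Op \<Longrightarrow> trace X \<alpha> (Ex X T \<alpha> U) = U" by (rule trace_Ex[OF emb X])
    show "\<And>U. U \<in> Op \<Longrightarrow> Ex X T \<alpha> U \<subseteq> topspace T" unfolding Ex_def by blast
  qed (simp_all add: assms(1) Ex_Int Ex_empty[OF dense] Ex_top)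
  have "Opw X Op T \<alpha> \<subseteq> OpS X Op T \<alpha>"
    unfolding Opw_def OpS_def using openin_Ex trace_E by auto
  then have "Covw X Op Cov T \<alpha> = CovE"
    unfolding Covw_def CovS_def CovE_def Opw_def by auto
  then show ?thesis
    unfolding admissibly_additive_def by (simp add: generalized_topology_iff_additive)
qed

end
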